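(* For every $\delta=1/k$ ($k\in\mathbb N$) and $\xi>0$, $$\|N_\xi(1-\pi_\delta)\|_{L^1\to L^1}\le\frac12\,\delta\,\xi^{-1}\,\mathrm{Var}(\rho).$$
   Context: $\rho$ is a function of bounded variation supported in $[-1/2,1/2]$ with $\int\rho=1$, $\rho_\xi(x)=\xi^{-1}\rho(x/\xi)$, and $\mathrm{Var}$ denotes total variation. With $\pi(x)=\min_{i\in\mathbb Z}|x-2i|$, $N_\xi f=\pi_*(\rho_\xi*\hat f)$ for $f\in L^1([0,1])$, where $\hat f$ is $f$ extended by $0$ outside $[0,1]$ and $\pi_*$ is the pushforward by $\pi$. $\pi_\delta$ is the Ulam projection: on each interval of the partition of $[0,1]$ into $k$ intervals of length $\delta$, $\pi_\delta f$ equals the average of $f$ on that interval (conditional expectation). *)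

theory Defs
  imports "HOL-Analysis.Analysis"
begin

definition variation_sums :: "(real \<Rightarrow> real) \<Rightarrow> real set" where
  "variation_sums g = {(\<Sum>i<n. \<bar>g (x (Suc i)) - g (x i)\<bar>) | (x :: nat \<Rightarrow> real) n.
       \<forall>i<n. x i \<le> x (Suc i)}"

definition bounded_variation :: "(real \<Rightarrow> real) \<Rightarrow> bool" where
  "bounded_variation g \<longleftrightarrow> bdd_above (variation_sums g)"

definition Var :: "(real \<Rightarrow> real) \<Rightarrow> real" where
  "Var g = Sup (variation_sums g)"

definition rho_scaled :: "(real \<Rightarrow> real) \<Rightarrow> real \<Rightarrow> real \<Rightarrow> real" where
  "rho_scaled \<rho> \<xi> x = \<rho> (x / \<xi>) / \<xi>"

definition pi_fold :: "real \<Rightarrow> real" where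
  "pi_fold x = Inf {\<bar>x - 2 * of_int i\<bar> | i :: int. True}"

definition ext0 :: "(real \<Rightarrow> real) \<Rightarrow> real \<Rightarrow> real" where
  "ext0 f x = (if x \<in> {0..1} then f x else 0)"

definition conv :: "(real \<Rightarrow> real) \<Rightarrow> (real \<Rightarrow> real) \<Rightarrow> real \<Rightarrow> real" where
  "conv g h x = integral UNIV (\<lambda>t. g (x - t) * h t)"

(* pushforward of a density g by pi_fold; since |pi_fold'| = 1 a.e., the density
   of the pushforward at y is the sum of g over the preimage of y *)
definition pushforward_pi :: "(real \<Rightarrow> real) \<Rightarrow> real \<Rightarrow> real" where
  "pushforward_pi g y = (if y \<in> {0..1} then infsum g {x. pi_fold x = y} else 0)"

definition N_op :: "(real \<Rightarrow> real) \<Rightarrow> real \<Rightarrow> (real \<Rightarrow> real) \<Rightarrow> real \<Rightarrow> real" where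
  "N_op \<rho> \<xi> f = pushforward_pi (conv (rho_scaled \<rho> \<xi>) (ext0 f))"

(* Ulam projection onto the partition of [0,1] into k intervals of length 1/k:
   the intervals are [j/k,(j+1)/k), the last one closed. *)
definition ulam :: "nat \<Rightarrow> (real \<Rightarrow> real) \<Rightarrow> real \<Rightarrow> real" where
  "ulam k f x = (if x \<in> {0..1} then
      (let j = min (nat \<lfloor>x * real k\<rfloor>) (k - 1) in
        real k * integral {real j / real k .. real (Suc j) / real k} f)
    else 0)"

definition L1norm :: "(real \<Rightarrow> real) \<Rightarrow> real" where
  "L1norm f = integral {0..1} (\<lambda>x. \<bar>f x\<bar>)"

end

theory Submission
  imports Defs
begin

text \<open>Write \<open>r = \<rho>\<^sub>\<xi>\<close>, a kernel of total variation at most \<open>Var \<rho> / \<xi>\<close>. On each Ulam cell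
  \<open>J\<close> of length \<open>\<delta> = 1/k\<close> the error \<open>f - \<pi>\<^sub>\<delta> f\<close> has mean zero, so convolving it with \<open>r\<close>
  only sees the differences \<open>r (x - t) - r (x - s)\<close> for \<open>s, t \<in> J\<close>. Translating a function of
  bounded variation by \<open>|t - s|\<close> moves it by at most \<open>|t - s| Var r\<close> in \<open>L\<^sup>1\<close>, and \<open>|t - s|\<close>
  averages to at most \<open>\<delta>/2\<close> over \<open>s \<in> J\<close>; hence the piece of \<open>J\<close> contributes at most
  \<open>\<delta>/2 \<cdot> Var r \<cdot> \<integral>\<^sub>J |f|\<close>. Summing over the cells bounds the \<open>L\<^sup>1\<close> norm of the convolution,
  and pushing forward along the folding map \<open>\<pi>\<close> does not increase \<open>L\<^sup>1\<close> norms.\<close>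

section \<open>Lebesgue measure on the real line\<close>

lemma sigma_finite_measure_completion:
  assumes "sigma_finite_measure M"
  shows "sigma_finite_measure (completion M)"
proof
  obtain A where A: "countable A" "A \<subseteq> sets M" "\<Union>A = space M" "\<forall>a\<in>A. emeasure M a \<noteq> \<infinity>"
    using sigma_finite_measure.sigma_finite_countable[OF assms] by blast
  then show "\<exists>A. countable A \<and> A \<subseteq> sets (completion M) \<and> \<Union>A = space (completion M) \<and>
      (\<forall>a\<in>A. emeasure (completion M) a \<noteq> \<infinity>)"
    by (intro exI[of _ A]) (auto simp: subset_eq)
qed

interpretation lebesgue: sigma_finite_measure "lebesgue :: 'a::euclidean_space measure"
  by (rule sigma_finite_measure_completion) (rule lborel.sigma_finite_measure_axioms)

lemma measurable_lebesgue_borel_id [measurable]: "(\<lambda>x. x) \<in> lebesgue \<rightarrow>\<^sub>M borel"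
  by (rule measurable_completion) simp

lemma measurable_fst_lebesgue_borel [measurable]: "fst \<in> lebesgue \<Otimes>\<^sub>M M \<rightarrow>\<^sub>M borel"
  by (rule measurable_compose[OF measurable_fst measurable_lebesgue_borel_id])

lemma measurable_snd_lebesgue_borel [measurable]: "snd \<in> M \<Otimes>\<^sub>M lebesgue \<rightarrow>\<^sub>M borel"
  by (rule measurable_compose[OF measurable_snd measurable_lebesgue_borel_id])

lemma measurable_lebesgue_real_affine: "c \<noteq> 0 \<Longrightarrow> (\<lambda>x::real. t + c * x) \<in> lebesgue \<rightarrow>\<^sub>M lebesgue"
  using lebesgue_affine_measurable[where c = "\<lambda>x::real. c"] by simp

lemma (in sigma_finite_measure) nn_integral_rotate3:
  fixes F :: "('a \<times> 'a) \<times> 'a \<Rightarrow> ennreal"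
  assumes F [measurable]: "F \<in> borel_measurable ((M \<Otimes>\<^sub>M M) \<Otimes>\<^sub>M M)"
  shows "(\<integral>\<^sup>+x. \<integral>\<^sup>+t. \<integral>\<^sup>+s. F ((x, t), s) \<partial>M \<partial>M \<partial>M) = (\<integral>\<^sup>+t. \<integral>\<^sup>+s. \<integral>\<^sup>+x. F ((x, t), s) \<partial>M \<partial>M \<partial>M)"
proof -
  interpret pair_sigma_finite M M ..
  have [measurable]: "(\<lambda>p. \<integral>\<^sup>+s. F (p, s) \<partial>M) \<in> borel_measurable (M \<Otimes>\<^sub>M M)"
    by measurable
  have "(\<integral>\<^sup>+x. \<integral>\<^sup>+t. \<integral>\<^sup>+s. F ((x, t), s) \<partial>M \<partial>M \<partial>M) = (\<integral>\<^sup>+t. \<integral>\<^sup>+x. \<integral>\<^sup>+s. F ((x, t), s) \<partial>M \<partial>M \<partial>M)"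
    using Fubini'[of "\<lambda>x t. \<integral>\<^sup>+s. F ((x, t), s) \<partial>M"] by simp
  also have "\<dots> = (\<integral>\<^sup>+t. \<integral>\<^sup>+s. \<integral>\<^sup>+x. F ((x, t), s) \<partial>M \<partial>M \<partial>M)"
  proof (rule nn_integral_cong)
    fix t assume "t \<in> space M"
    then have "(\<lambda>p. F ((fst p, t), snd p)) \<in> borel_measurable (M \<Otimes>\<^sub>M M)"
      by measurable
    then show "(\<integral>\<^sup>+x. \<integral>\<^sup>+s. F ((x, t), s) \<partial>M \<partial>M) = (\<integral>\<^sup>+s. \<integral>\<^sup>+x. F ((x, t), s) \<partial>M \<partial>M)"
      using Fubini'[of "\<lambda>x s. F ((x, t), s)"] by (simp add: case_prod_beta')
  qed
  finally show ?thesis .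
qed

lemma nn_integral_lebesgue_indicator_has_integral:
  fixes f :: "'a::euclidean_space \<Rightarrow> real"
  assumes "\<And>x. x \<in> \<Omega> \<Longrightarrow> 0 \<le> f x" and "(f has_integral I) \<Omega>"
  shows "(\<integral>\<^sup>+x. ennreal (indicator \<Omega> x * f x) \<partial>lebesgue) = ennreal I"
proof -
  have "(\<lambda>x. indicator \<Omega> x * f x) = (\<lambda>x. if x \<in> \<Omega> then f x else 0)"
    by (auto simp: indicator_def)
  then have "((\<lambda>x. indicator \<Omega> x * f x) has_integral I) UNIV"
    using assms(2) by (simp add: has_integral_restrict_UNIV)
  then show ?thesis
    using assms(1) by (subst (asm) has_integral_iff_nn_integral_lebesgue) (auto simp: indicator_def)
qed

lemma nn_integral_indicator_translate:
  fixes h :: "real \<Rightarrow> real" and c :: real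
  assumes [measurable]: "h \<in> borel_measurable lebesgue"
  shows "(\<integral>\<^sup>+y. ennreal (indicator {0<..<1} y * \<bar>h (c + y)\<bar>) \<partial>lebesgue)
      = (\<integral>\<^sup>+x. ennreal (indicator {c<..<c + 1} x * \<bar>h x\<bar>) \<partial>lebesgue)"
    and "(\<integral>\<^sup>+y. ennreal (indicator {0<..<1} y * \<bar>h (c - y)\<bar>) \<partial>lebesgue)
      = (\<integral>\<^sup>+x. ennreal (indicator {c - 1<..<c} x * \<bar>h x\<bar>) \<partial>lebesgue)"
proof -
  show "(\<integral>\<^sup>+y. ennreal (indicator {0<..<1} y * \<bar>h (c + y)\<bar>) \<partial>lebesgue)
      = (\<integral>\<^sup>+x. ennreal (indicator {c<..<c + 1} x * \<bar>h x\<bar>) \<partial>lebesgue)"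
    using nn_integral_real_affine_lebesgue[of "\<lambda>x. ennreal (indicator {c<..<c + 1} x * \<bar>h x\<bar>)" 1 c]
    by (simp add: indicator_def)
  show "(\<integral>\<^sup>+y. ennreal (indicator {0<..<1} y * \<bar>h (c - y)\<bar>) \<partial>lebesgue)
      = (\<integral>\<^sup>+x. ennreal (indicator {c - 1<..<c} x * \<bar>h x\<bar>) \<partial>lebesgue)"
    using nn_integral_real_affine_lebesgue[of "\<lambda>x. ennreal (indicator {c - 1<..<c} x * \<bar>h x\<bar>)" "-1" c]
    by (simp add: indicator_def conj_commute)
qed

lemma L1norm_nonneg: "0 \<le> L1norm f"
  unfolding L1norm_def
  by (cases "(\<lambda>x. \<bar>f x\<bar>) integrable_on {0..1}") (simp_all add: integral_nonneg not_integrable_integral)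

lemma nn_integral_L1norm:
  assumes "(\<lambda>x. \<bar>g x\<bar>) integrable_on {0..1}"
  shows "(\<integral>\<^sup>+x. ennreal (indicator {0..1} x * \<bar>g x\<bar>) \<partial>lebesgue) = ennreal (L1norm g)"
  unfolding L1norm_def using assms
  by (intro nn_integral_lebesgue_indicator_has_integral) (auto simp: has_integral_integral)

section \<open>Functions of bounded variation\<close>

lemma variation_sum_le_Var:
  assumes "bounded_variation g" and "\<forall>i<n. p i \<le> p (Suc i)"
  shows "(\<Sum>i<n. \<bar>g (p (Suc i)) - g (p i)\<bar>) \<le> Var g"
  unfolding Var_def
  by (rule cSup_upper) (use assms in \<open>auto simp: bounded_variation_def variation_sums_def\<close>)

lemma Var_nonneg: "bounded_variation g \<Longrightarrow> 0 \<le> Var g"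
  using variation_sum_le_Var[of g 0] by simp

lemma bounded_variation_Var_le:
  assumes "\<And>p n. \<forall>i<n. p i \<le> p (Suc i) \<Longrightarrow> (\<Sum>i<n. \<bar>g (p (Suc i)) - g (p i)\<bar>) \<le> V"
  shows "bounded_variation g" and "Var g \<le> V"
proof -
  have "0 \<in> variation_sums g"
    unfolding variation_sums_def by (intro CollectI exI[of _ "\<lambda>_::nat. 0::real"] exI[of _ "0::nat"]) simp
  moreover have le: "\<And>S. S \<in> variation_sums g \<Longrightarrow> S \<le> V"
    using assms unfolding variation_sums_def by blast
  ultimately show "bounded_variation g" "Var g \<le> V"
    unfolding bounded_variation_def Var_def by (auto intro!: bdd_aboveI cSup_least)
qed

lemma abs_le_Var_if_zero:
  assumes "bounded_variation g" and "g z = 0"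
  shows "\<bar>g y\<bar> \<le> Var g"
proof -
  define p where "p i = (if i = 0 then min y z else max y z)" for i :: nat
  have "(\<Sum>i<1. \<bar>g (p (Suc i)) - g (p i)\<bar>) \<le> Var g"
    by (rule variation_sum_le_Var[OF assms(1)]) (simp add: p_def)
  then show ?thesis
    using assms(2) by (simp add: p_def min_def max_def split: if_splits)
qed

lemma abs_le_Var_if_compact_support:
  assumes "bounded_variation g" and "\<And>y. \<bar>y\<bar> > B \<Longrightarrow> g y = 0"
  shows "\<bar>g y\<bar> \<le> Var g"
  using abs_le_Var_if_zero[OF assms(1) assms(2)[of "\<bar>B\<bar> + 1"]] by simp

lemma
  assumes "bounded_variation \<rho>" and "\<xi> > 0"
  shows bounded_variation_rho_scaled: "bounded_variation (rho_scaled \<rho> \<xi>)"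
    and Var_rho_scaled_le: "Var (rho_scaled \<rho> \<xi>) \<le> Var \<rho> / \<xi>"
proof -
  have "(\<Sum>i<n. \<bar>rho_scaled \<rho> \<xi> (p (Suc i)) - rho_scaled \<rho> \<xi> (p i)\<bar>) \<le> Var \<rho> / \<xi>"
    if "\<forall>i<n. p i \<le> p (Suc i)" for p n
  proof -
    have "(\<Sum>i<n. \<bar>\<rho> (p (Suc i) / \<xi>) - \<rho> (p i / \<xi>)\<bar>) \<le> Var \<rho>"
      using variation_sum_le_Var[OF assms(1), of n "\<lambda>i. p i / \<xi>"] that assms(2)
      by (simp add: divide_right_mono)
    moreover have "(\<Sum>i<n. \<bar>rho_scaled \<rho> \<xi> (p (Suc i)) - rho_scaled \<rho> \<xi> (p i)\<bar>) =
        (\<Sum>i<n. \<bar>\<rho> (p (Suc i) / \<xi>) - \<rho> (p i / \<xi>)\<bar>) / \<xi>"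
      unfolding rho_scaled_def sum_divide_distrib using assms(2)
      by (intro sum.cong) (auto simp: diff_divide_distrib[symmetric] abs_div)
    ultimately show ?thesis
      using assms(2) by (simp add: divide_right_mono)
  qed
  then show "bounded_variation (rho_scaled \<rho> \<xi>)" "Var (rho_scaled \<rho> \<xi>) \<le> Var \<rho> / \<xi>"
    by (rule bounded_variation_Var_le, blast)+
qed

lemma rho_scaled_eq_0:
  assumes "\<And>x. x \<notin> {-1/2..1/2} \<Longrightarrow> \<rho> x = 0" and "\<xi> > 0" and "\<bar>y\<bar> > \<xi> / 2"
  shows "rho_scaled \<rho> \<xi> y = 0"
proof -
  have "\<bar>y / \<xi>\<bar> > 1/2" using assms(2,3) by (simp add: field_simps abs_div)
  then have "y / \<xi> \<notin> {-1/2..1/2}" by auto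
  then show ?thesis using assms(1) by (simp add: rho_scaled_def)
qed

definition variation_function :: "(real \<Rightarrow> real) \<Rightarrow> real \<Rightarrow> real" where
  "variation_function g x = Sup {(\<Sum>i<n. \<bar>g (p (Suc i)) - g (p i)\<bar>) | p n.
     (\<forall>i<n. p i \<le> p (Suc i)) \<and> p n \<le> x}"

lemma variation_sum_le_variation_function:
  assumes "bounded_variation g" and "\<forall>i<n. p i \<le> p (Suc i)" and "p n \<le> x"
  shows "(\<Sum>i<n. \<bar>g (p (Suc i)) - g (p i)\<bar>) \<le> variation_function g x"
  unfolding variation_function_def
proof (rule cSup_upper)
  show "bdd_above {(\<Sum>i<n. \<bar>g (p (Suc i)) - g (p i)\<bar>) | p n. (\<forall>i<n. p i \<le> p (Suc i)) \<and> p n \<le> x}"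
    using assms(1) unfolding bounded_variation_def variation_sums_def
    by (rule bdd_above_mono) blast
qed (use assms in blast)

lemma variation_function_add_le:
  assumes "bounded_variation g" and "x \<le> y"
  shows "variation_function g x + \<bar>g y - g x\<bar> \<le> variation_function g y"
proof -
  have "S \<le> variation_function g y - \<bar>g y - g x\<bar>"
    if S_mem: "S \<in> {(\<Sum>i<n. \<bar>g (p (Suc i)) - g (p i)\<bar>) | p n. (\<forall>i<n. p i \<le> p (Suc i)) \<and> p n \<le> x}"
    for S
  proof -
    obtain p n where S: "S = (\<Sum>i<n. \<bar>g (p (Suc i)) - g (p i)\<bar>)"
      and p: "\<forall>i<n. p i \<le> p (Suc i)" "p n \<le> x"
      using S_mem by blast
    define q where "q i = (if i \<le> n then p i else if i = Suc n then x else y)" for i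
    have "S + \<bar>g x - g (p n)\<bar> + \<bar>g y - g x\<bar> = (\<Sum>i<Suc (Suc n). \<bar>g (q (Suc i)) - g (q i)\<bar>)"
      unfolding S q_def by simp
    also have "\<dots> \<le> variation_function g y"
      using p assms by (intro variation_sum_le_variation_function) (auto simp: q_def less_Suc_eq)
    finally show ?thesis by linarith
  qed
  then have "variation_function g x \<le> variation_function g y - \<bar>g y - g x\<bar>"
    unfolding variation_function_def[of g x]
    by (intro cSup_least) (auto intro!: exI[of _ "\<lambda>_::nat. x"] exI[of _ "0::nat"])
  then show ?thesis by linarith
qed

text \<open>Jordan decomposition: g is the difference of the monotone functions
  \<open>variation_function g\<close> and \<open>variation_function g - g\<close>.\<close>

lemma borel_measurable_bounded_variation:
  assumes "bounded_variation g"
  shows "g \<in> borel_measurable borel"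
proof -
  have "variation_function g x \<le> variation_function g y"
    and "variation_function g x - g x \<le> variation_function g y - g y" if "x \<le> y" for x y
    using variation_function_add_le[OF assms that] abs_ge_self[of "g y - g x"] abs_ge_zero[of "g y - g x"]
    by linarith+
  then have mono_V: "mono (variation_function g)" and mono_V_minus: "mono (\<lambda>x. variation_function g x - g x)"
    by (auto intro!: monoI)
  have "(\<lambda>x. variation_function g x - (variation_function g x - g x)) \<in> borel_measurable borel"
    using borel_measurable_mono[OF mono_V] borel_measurable_mono[OF mono_V_minus] by measurable
  then show ?thesis by simp
qed

lemma indicator_atLeastLessThan_eq_sum:
  fixes a b y :: real
  assumes "0 \<le> a"
  shows "indicator {b..<b + real M * a} y = (\<Sum>i<M. indicator {b + real i * a..<b + real (Suc i) * a} y :: real)"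
proof (induction M)
  case (Suc M)
  have "indicator {b..<b + real (Suc M) * a} y
      = (indicator {b..<b + real M * a} y + indicator {b + real M * a..<b + real (Suc M) * a} y :: real)"
  proof -
    define u where "u = b + real M * a"
    have "b \<le> u" using assms by (simp add: u_def)
    moreover have "b + real (Suc M) * a = u + a" by (simp add: u_def algebra_simps)
    ultimately show ?thesis using assms by (auto simp: indicator_def u_def[symmetric])
  qed
  then show ?case using Suc by simp
qed simp

lemma nn_integral_eq_sum_translates:
  fixes u :: "real \<Rightarrow> real"
  assumes [measurable]: "u \<in> borel_measurable borel" and a: "0 \<le> a"
    and supp: "\<And>y. y \<notin> {b..<b + real M * a} \<Longrightarrow> u y = 0"
  shows "(\<integral>\<^sup>+y. ennreal \<bar>u y\<bar> \<partial>lebesgue)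
    = (\<integral>\<^sup>+z. (\<Sum>i<M. ennreal (indicator {0..<a} z * \<bar>u (z + (b + real i * a))\<bar>)) \<partial>lebesgue)"
proof -
  define I where "I i = {b + real i * a..<b + real (Suc i) * a}" for i
  have "(\<integral>\<^sup>+y. ennreal \<bar>u y\<bar> \<partial>lebesgue) = (\<integral>\<^sup>+y. (\<Sum>i<M. ennreal (indicator (I i) y * \<bar>u y\<bar>)) \<partial>lebesgue)"
  proof (intro nn_integral_cong)
    fix y
    have "\<bar>u y\<bar> = indicator {b..<b + real M * a} y * \<bar>u y\<bar>"
      using supp[of y] by (cases "y \<in> {b..<b + real M * a}") auto
    then show "ennreal \<bar>u y\<bar> = (\<Sum>i<M. ennreal (indicator (I i) y * \<bar>u y\<bar>))"
      using a by (simp add: indicator_atLeastLessThan_eq_sum sum_distrib_right sum_ennreal I_def)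
  qed
  also have "\<dots> = (\<Sum>i<M. \<integral>\<^sup>+y. ennreal (indicator (I i) y * \<bar>u y\<bar>) \<partial>lebesgue)"
    unfolding I_def by (rule nn_integral_sum) measurable
  also have "\<dots> = (\<Sum>i<M. \<integral>\<^sup>+z. ennreal (indicator {0..<a} z * \<bar>u (z + (b + real i * a))\<bar>) \<partial>lebesgue)"
  proof (intro sum.cong refl)
    fix i
    have "(\<integral>\<^sup>+y. ennreal (indicator (I i) y * \<bar>u y\<bar>) \<partial>lebesgue)
      = ennreal \<bar>1\<bar> * (\<integral>\<^sup>+z. ennreal (indicator (I i) ((b + real i * a) + 1 * z) *
          \<bar>u ((b + real i * a) + 1 * z)\<bar>) \<partial>lebesgue)"
      unfolding I_def by (rule nn_integral_real_affine_lebesgue) measurable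
    also have "\<dots> = (\<integral>\<^sup>+z. ennreal (indicator {0..<a} z * \<bar>u (z + (b + real i * a))\<bar>) \<partial>lebesgue)"
      by (simp only: abs_one ennreal_1 mult_1, intro nn_integral_cong) (auto simp: indicator_def algebra_simps I_def)
    finally show "(\<integral>\<^sup>+y. ennreal (indicator (I i) y * \<bar>u y\<bar>) \<partial>lebesgue) = \<dots>" .
  qed
  also have "\<dots> = (\<integral>\<^sup>+z. (\<Sum>i<M. ennreal (indicator {0..<a} z * \<bar>u (z + (b + real i * a))\<bar>)) \<partial>lebesgue)"
    by (rule nn_integral_sum[symmetric]) measurable
  finally show ?thesis .
qed

text \<open>For each \<open>z \<in> [0, a)\<close> the differences \<open>r (z + b + (i + 1) a) - r (z + b + i a)\<close> form one
  variation sum of \<open>r\<close>.\<close>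

lemma nn_integral_abs_shift_diff_le:
  fixes r :: "real \<Rightarrow> real"
  assumes bv: "bounded_variation r" and supp: "\<And>y. \<bar>y\<bar> > B \<Longrightarrow> r y = 0" and a: "a > 0"
  shows "(\<integral>\<^sup>+y. ennreal \<bar>r (y + a) - r y\<bar> \<partial>lebesgue) \<le> ennreal (a * Var r)"
proof -
  note [measurable] = borel_measurable_bounded_variation[OF bv]
  obtain N :: nat where "(\<bar>B\<bar> + a) / a \<le> real N" using real_arch_simple by blast
  then have Na: "\<bar>B\<bar> + a \<le> real N * a" using a by (simp add: field_simps)
  define b where "b = - real N * a"
  have "r (y + a) - r y = 0" if "y \<notin> {b..<b + real (2 * N) * a}" for y
  proof -
    have "y < b \<or> y \<ge> real N * a" using that by (auto simp: b_def algebra_simps)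
    then have "\<bar>y\<bar> > B \<and> \<bar>y + a\<bar> > B" using Na a unfolding b_def by auto
    then show ?thesis using supp by simp
  qed
  then have "(\<integral>\<^sup>+y. ennreal \<bar>r (y + a) - r y\<bar> \<partial>lebesgue) =
      (\<integral>\<^sup>+z. (\<Sum>i<2 * N. ennreal (indicator {0..<a} z *
        \<bar>r (z + (b + real i * a) + a) - r (z + (b + real i * a))\<bar>)) \<partial>lebesgue)"
    using a by (intro nn_integral_eq_sum_translates[where u = "\<lambda>y. r (y + a) - r y"]) auto
  also have "\<dots> \<le> (\<integral>\<^sup>+z. ennreal (Var r) * indicator {0..<a} z \<partial>lebesgue)"
  proof (intro nn_integral_mono)
    fix z :: real
    have "(\<Sum>i<2 * N. \<bar>r ((\<lambda>i. z + (b + real i * a)) (Suc i)) - r ((\<lambda>i. z + (b + real i * a)) i)\<bar>) \<le> Var r"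
      by (rule variation_sum_le_Var[OF bv]) (use a in simp)
    then show "(\<Sum>i<2 * N. ennreal (indicator {0..<a} z *
        \<bar>r (z + (b + real i * a) + a) - r (z + (b + real i * a))\<bar>)) \<le> ennreal (Var r) * indicator {0..<a} z"
      by (cases "z \<in> {0..<a}") (simp_all add: sum_ennreal ennreal_leI algebra_simps)
  qed
  also have "\<dots> = ennreal (a * Var r)"
    using a Var_nonneg[OF bv] by (simp add: nn_integral_cmult_indicator ennreal_mult' mult.commute)
  finally show ?thesis .
qed

lemma nn_integral_abs_translate_diff_le:
  fixes r :: "real \<Rightarrow> real"
  assumes bv: "bounded_variation r" and supp: "\<And>y. \<bar>y\<bar> > B \<Longrightarrow> r y = 0"
  shows "(\<integral>\<^sup>+x. ennreal \<bar>r (x - t) - r (x - s)\<bar> \<partial>lebesgue) \<le> ennreal (\<bar>t - s\<bar> * Var r)"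
proof -
  note [measurable] = borel_measurable_bounded_variation[OF bv]
  have *: "(\<integral>\<^sup>+x. ennreal \<bar>r (x - t) - r (x - s)\<bar> \<partial>lebesgue) \<le> ennreal ((t - s) * Var r)"
    if st: "s < t" for s t
  proof -
    have "(\<integral>\<^sup>+x. ennreal \<bar>r (x - t) - r (x - s)\<bar> \<partial>lebesgue)
        = ennreal \<bar>1\<bar> * (\<integral>\<^sup>+z. ennreal \<bar>r ((t + 1 * z) - t) - r ((t + 1 * z) - s)\<bar> \<partial>lebesgue)"
      by (rule nn_integral_real_affine_lebesgue) measurable
    also have "\<dots> = (\<integral>\<^sup>+z. ennreal \<bar>r (z + (t - s)) - r z\<bar> \<partial>lebesgue)"
      by (simp only: abs_one ennreal_1 mult_1, intro nn_integral_cong) (auto simp: algebra_simps abs_minus_commute)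
    also have "\<dots> \<le> ennreal ((t - s) * Var r)"
      using nn_integral_abs_shift_diff_le[OF bv supp, where a = "t - s"] st by simp
    finally show ?thesis .
  qed
  consider "s < t" | "t < s" | "t = s" by linarith
  then show ?thesis
    by cases (use *[of s t] *[of t s] in \<open>simp_all add: abs_minus_commute\<close>)
qed

section \<open>Convolution with a kernel of bounded variation\<close>

lemma has_integral_abs_diff:
  fixes c d t :: real
  assumes "c \<le> t" and "t \<le> d"
  shows "((\<lambda>s. \<bar>t - s\<bar>) has_integral ((t - c)\<^sup>2 / 2 + (d - t)\<^sup>2 / 2)) {c..d}"
proof (rule has_integral_combine[OF assms])
  have "((\<lambda>s. t - s) has_integral ((\<lambda>s. - (t - s)\<^sup>2 / 2) t - (\<lambda>s. - (t - s)\<^sup>2 / 2) c)) {c..t}"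
    by (rule fundamental_theorem_of_calculus[OF assms(1)])
      (auto intro!: derivative_eq_intros simp: has_real_derivative_iff_has_vector_derivative[symmetric] field_simps)
  then show "((\<lambda>s. \<bar>t - s\<bar>) has_integral (t - c)\<^sup>2 / 2) {c..t}"
    by (rule has_integral_eq_rhs[OF has_integral_eq, rotated]) auto
  have "((\<lambda>s. s - t) has_integral ((\<lambda>s. (s - t)\<^sup>2 / 2) d - (\<lambda>s. (s - t)\<^sup>2 / 2) t)) {t..d}"
    by (rule fundamental_theorem_of_calculus[OF assms(2)])
      (auto intro!: derivative_eq_intros simp: has_real_derivative_iff_has_vector_derivative[symmetric] field_simps)
  then show "((\<lambda>s. \<bar>t - s\<bar>) has_integral (d - t)\<^sup>2 / 2) {t..d}"
    by (rule has_integral_eq_rhs[OF has_integral_eq, rotated]) auto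
qed

lemma nn_integral_indicator_abs_diff_le:
  fixes c d t :: real
  assumes "c \<le> t" and "t \<le> d"
  shows "(\<integral>\<^sup>+s. ennreal (indicator {c<..<d} s * \<bar>t - s\<bar>) \<partial>lebesgue) \<le> ennreal ((d - c)\<^sup>2 / 2)"
proof -
  have "(\<integral>\<^sup>+s. ennreal (indicator {c<..<d} s * \<bar>t - s\<bar>) \<partial>lebesgue)
      \<le> (\<integral>\<^sup>+s. ennreal (indicator {c..d} s * \<bar>t - s\<bar>) \<partial>lebesgue)"
    by (intro nn_integral_mono ennreal_leI) (auto simp: indicator_def)
  also have "\<dots> = ennreal ((t - c)\<^sup>2 / 2 + (d - t)\<^sup>2 / 2)"
    by (intro nn_integral_lebesgue_indicator_has_integral has_integral_abs_diff assms) simp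
  also have "\<dots> \<le> ennreal ((d - c)\<^sup>2 / 2)"
  proof (rule ennreal_leI)
    have "(d - c)\<^sup>2 = (t - c)\<^sup>2 + (d - t)\<^sup>2 + 2 * ((t - c) * (d - t))"
      by (simp add: power2_eq_square algebra_simps)
    moreover have "0 \<le> (t - c) * (d - t)" using assms by simp
    ultimately show "(t - c)\<^sup>2 / 2 + (d - t)\<^sup>2 / 2 \<le> (d - c)\<^sup>2 / 2" by linarith
  qed
  finally show ?thesis .
qed

lemma integrable_bounded_times:
  fixes R g :: "real \<Rightarrow> real"
  assumes "R \<in> borel_measurable lebesgue" and "\<And>t. \<bar>R t\<bar> \<le> C" and "integrable lebesgue g"
  shows "integrable lebesgue (\<lambda>t. R t * g t)"
  by (rule Bochner_Integration.integrable_bound[OF integrable_mult_right[OF assms(3), of C]])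
    (use assms order_trans[OF abs_ge_zero assms(2)] in
      \<open>auto simp: abs_mult intro!: mult_right_mono borel_measurable_integrable\<close>)

lemma integral_mean_zero_eq:
  fixes R \<phi> :: "real \<Rightarrow> real"
  assumes R: "R \<in> borel_measurable lebesgue" "\<And>t. \<bar>R t\<bar> \<le> C"
    and \<phi>: "integrable lebesgue \<phi>" and cd: "c < d"
    and a: "a * (d - c) = (\<integral>t. indicator {c<..<d} t * \<phi> t \<partial>lebesgue)"
  shows "(\<integral>t. R t * (indicator {c<..<d} t * (\<phi> t - a)) \<partial>lebesgue)
    = (\<integral>t. indicator {c<..<d} t * \<phi> t * (R t - (\<integral>s. R s * indicator {c<..<d} s \<partial>lebesgue) / (d - c)) \<partial>lebesgue)"
proof -
  let ?\<iota> = "indicator {c<..<d} :: real \<Rightarrow> real"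
  define \<psi> where "\<psi> t = ?\<iota> t * \<phi> t" for t
  define m where "m = (\<integral>s. R s * ?\<iota> s \<partial>lebesgue) / (d - c)"
  have \<psi>: "integrable lebesgue \<psi>"
    unfolding \<psi>_def using integrable_mult_indicator[OF _ \<phi>, of "{c<..<d}"] by simp
  have R\<psi>: "integrable lebesgue (\<lambda>t. R t * \<psi> t)" and R\<iota>: "integrable lebesgue (\<lambda>t. R t * ?\<iota> t)"
    using cd by (auto intro!: integrable_bounded_times[OF R] \<psi> integrable_real_indicator)
  have "(\<integral>t. R t * (?\<iota> t * (\<phi> t - a)) \<partial>lebesgue) = (\<integral>t. R t * \<psi> t - a * (R t * ?\<iota> t) \<partial>lebesgue)"
    by (simp add: \<psi>_def algebra_simps)
  also have "\<dots> = (\<integral>t. R t * \<psi> t \<partial>lebesgue) - a * (\<integral>t. R t * ?\<iota> t \<partial>lebesgue)"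
    using R\<psi> R\<iota> by simp
  also have "a * (\<integral>t. R t * ?\<iota> t \<partial>lebesgue) = m * (\<integral>t. \<psi> t \<partial>lebesgue)"
    using cd unfolding m_def \<psi>_def a[symmetric] by simp
  also have "(\<integral>t. R t * \<psi> t \<partial>lebesgue) - m * (\<integral>t. \<psi> t \<partial>lebesgue) = (\<integral>t. \<psi> t * (R t - m) \<partial>lebesgue)"
    using R\<psi> \<psi> by (simp add: algebra_simps)
  finally show ?thesis unfolding \<psi>_def m_def .
qed

lemma abs_minus_interval_average_le:
  fixes R :: "real \<Rightarrow> real"
  assumes R: "integrable lebesgue (\<lambda>s. R s * indicator {c<..<d} s)" and cd: "c < d"
  shows "ennreal (\<bar>R t - (\<integral>s. R s * indicator {c<..<d} s \<partial>lebesgue) / (d - c)\<bar> * (d - c))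
    \<le> (\<integral>\<^sup>+s. ennreal (indicator {c<..<d} s * \<bar>R t - R s\<bar>) \<partial>lebesgue)"
proof -
  let ?\<iota> = "indicator {c<..<d} :: real \<Rightarrow> real"
  have \<iota>: "integrable lebesgue ?\<iota>" and \<iota>_integral: "(\<integral>s. ?\<iota> s \<partial>lebesgue) = d - c"
    using cd by (auto intro!: integrable_real_indicator simp: measure_def)
  have "(\<integral>s. ?\<iota> s * (R t - R s) \<partial>lebesgue) = (\<integral>s. R t * ?\<iota> s - R s * ?\<iota> s \<partial>lebesgue)"
    by (simp add: algebra_simps)
  also have "\<dots> = R t * (\<integral>s. ?\<iota> s \<partial>lebesgue) - (\<integral>s. R s * ?\<iota> s \<partial>lebesgue)"
    using \<iota> R by (simp only: Bochner_Integration.integral_diff integrable_mult_right integral_mult_right_zero)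
  also have "\<dots> = (R t - (\<integral>s. R s * ?\<iota> s \<partial>lebesgue) / (d - c)) * (d - c)"
    using cd unfolding \<iota>_integral by (simp add: field_simps)
  finally have eq: "(\<integral>s. ?\<iota> s * (R t - R s) \<partial>lebesgue) = (R t - (\<integral>s. R s * ?\<iota> s \<partial>lebesgue) / (d - c)) * (d - c)" .
  have "integrable lebesgue (\<lambda>s. R t * ?\<iota> s - R s * ?\<iota> s)"
    using \<iota> R by simp
  then have "integrable lebesgue (\<lambda>s. ?\<iota> s * (R t - R s))"
    by (simp add: algebra_simps)
  from integral_norm_bound_ennreal[OF this] show ?thesis
    using cd unfolding eq by (simp add: abs_mult)
qed

lemma abs_integral_mean_zero_le:
  fixes R \<phi> :: "real \<Rightarrow> real"
  assumes R [measurable]: "R \<in> borel_measurable lebesgue" and R_bound: "\<And>t. \<bar>R t\<bar> \<le> C"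
    and \<phi>: "integrable lebesgue \<phi>" and cd: "c < d"
    and a: "a * (d - c) = (\<integral>t. indicator {c<..<d} t * \<phi> t \<partial>lebesgue)"
  shows "ennreal \<bar>\<integral>t. R t * (indicator {c<..<d} t * (\<phi> t - a)) \<partial>lebesgue\<bar>
    \<le> (\<integral>\<^sup>+t. ennreal (indicator {c<..<d} t * \<bar>\<phi> t\<bar> / (d - c))
          * (\<integral>\<^sup>+s. ennreal (indicator {c<..<d} s * \<bar>R t - R s\<bar>) \<partial>lebesgue) \<partial>lebesgue)"
proof -
  let ?\<iota> = "indicator {c<..<d} :: real \<Rightarrow> real"
  define m where "m = (\<integral>s. R s * ?\<iota> s \<partial>lebesgue) / (d - c)"
  have R\<iota>: "integrable lebesgue (\<lambda>s. R s * ?\<iota> s)"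
    using cd by (auto intro!: integrable_bounded_times[OF R R_bound] integrable_real_indicator)
  have "integrable lebesgue (\<lambda>t. R t * (?\<iota> t * \<phi> t) - m * (?\<iota> t * \<phi> t))"
    using integrable_mult_indicator[OF _ \<phi>, of "{c<..<d}"]
    by (auto intro!: integrable_bounded_times[OF R R_bound])
  then have "integrable lebesgue (\<lambda>t. ?\<iota> t * \<phi> t * (R t - m))"
    by (simp add: algebra_simps)
  from integral_norm_bound_ennreal[OF this]
  have "ennreal \<bar>\<integral>t. R t * (?\<iota> t * (\<phi> t - a)) \<partial>lebesgue\<bar> \<le> (\<integral>\<^sup>+t. ennreal \<bar>?\<iota> t * \<phi> t * (R t - m)\<bar> \<partial>lebesgue)"
    unfolding integral_mean_zero_eq[OF R R_bound \<phi> cd a] m_def by simp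
  also have "\<dots> \<le> (\<integral>\<^sup>+t. ennreal (?\<iota> t * \<bar>\<phi> t\<bar> / (d - c))
      * (\<integral>\<^sup>+s. ennreal (?\<iota> s * \<bar>R t - R s\<bar>) \<partial>lebesgue) \<partial>lebesgue)"
  proof (intro nn_integral_mono)
    fix t
    have abs_eq: "\<bar>?\<iota> t * \<phi> t * (R t - m)\<bar> = ?\<iota> t * \<bar>\<phi> t\<bar> / (d - c) * (\<bar>R t - m\<bar> * (d - c))"
      using cd by (simp add: abs_mult)
    have "ennreal \<bar>?\<iota> t * \<phi> t * (R t - m)\<bar> = ennreal (?\<iota> t * \<bar>\<phi> t\<bar> / (d - c)) * ennreal (\<bar>R t - m\<bar> * (d - c))"
      unfolding abs_eq using cd by (intro ennreal_mult) auto
    also have "\<dots> \<le> ennreal (?\<iota> t * \<bar>\<phi> t\<bar> / (d - c)) * (\<integral>\<^sup>+s. ennreal (?\<iota> s * \<bar>R t - R s\<bar>) \<partial>lebesgue)"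
      unfolding m_def by (intro mult_left_mono abs_minus_interval_average_le[OF R\<iota> cd]) simp
    finally show "ennreal \<bar>?\<iota> t * \<phi> t * (R t - m)\<bar> \<le> \<dots>" .
  qed
  finally show ?thesis .
qed

lemma nn_integral_cell_translate_diff_le:
  fixes r :: "real \<Rightarrow> real"
  assumes bv: "bounded_variation r" and supp: "\<And>y. \<bar>y\<bar> > B \<Longrightarrow> r y = 0" and t: "c \<le> t" "t \<le> d"
  shows "(\<integral>\<^sup>+s. \<integral>\<^sup>+x. ennreal (indicator {c<..<d} s * \<bar>r (x - t) - r (x - s)\<bar>) \<partial>lebesgue \<partial>lebesgue)
    \<le> ennreal (Var r * (d - c)\<^sup>2 / 2)"
proof -
  note [measurable] = borel_measurable_bounded_variation[OF bv]
  have "(\<integral>\<^sup>+s. \<integral>\<^sup>+x. ennreal (indicator {c<..<d} s * \<bar>r (x - t) - r (x - s)\<bar>) \<partial>lebesgue \<partial>lebesgue)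
      = (\<integral>\<^sup>+s. ennreal (indicator {c<..<d} s) * (\<integral>\<^sup>+x. ennreal \<bar>r (x - t) - r (x - s)\<bar> \<partial>lebesgue) \<partial>lebesgue)"
    by (intro nn_integral_cong) (simp add: nn_integral_cmult ennreal_mult')
  also have "\<dots> \<le> (\<integral>\<^sup>+s. ennreal (Var r) * ennreal (indicator {c<..<d} s * \<bar>t - s\<bar>) \<partial>lebesgue)"
    using nn_integral_abs_translate_diff_le[OF bv supp] Var_nonneg[OF bv]
    by (intro nn_integral_mono) (auto simp: indicator_def ennreal_mult'[symmetric] mult.commute)
  also have "\<dots> \<le> ennreal (Var r) * ennreal ((d - c)\<^sup>2 / 2)"
    using nn_integral_indicator_abs_diff_le[OF t] by (simp add: nn_integral_cmult mult_left_mono)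
  also have "\<dots> = ennreal (Var r * (d - c)\<^sup>2 / 2)"
    using Var_nonneg[OF bv] by (simp add: ennreal_mult'[symmetric])
  finally show ?thesis .
qed

lemma nn_integral_conv_mean_zero_le:
  fixes r \<phi> :: "real \<Rightarrow> real"
  assumes bv: "bounded_variation r" and supp: "\<And>y. \<bar>y\<bar> > B \<Longrightarrow> r y = 0"
    and \<phi>: "integrable lebesgue \<phi>" and cd: "c < d"
    and a: "a * (d - c) = (\<integral>t. indicator {c<..<d} t * \<phi> t \<partial>lebesgue)"
  shows "(\<integral>\<^sup>+x. ennreal \<bar>\<integral>t. r (x - t) * (indicator {c<..<d} t * (\<phi> t - a)) \<partial>lebesgue\<bar> \<partial>lebesgue)
    \<le> ennreal (Var r * (d - c) / 2) * (\<integral>\<^sup>+t. ennreal (indicator {c<..<d} t * \<bar>\<phi> t\<bar>) \<partial>lebesgue)"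
proof -
  let ?\<iota> = "indicator {c<..<d} :: real \<Rightarrow> real"
  define w where "w t = ennreal (?\<iota> t * \<bar>\<phi> t\<bar> / (d - c))" for t
  define D where "D x t s = ennreal (?\<iota> s * \<bar>r (x - t) - r (x - s)\<bar>)" for x t s
  note [measurable] = borel_measurable_bounded_variation[OF bv] borel_measurable_integrable[OF \<phi>]
  have r_bound: "\<bar>r y\<bar> \<le> Var r" for y
    using abs_le_Var_if_compact_support[OF bv supp] .
  have "(\<integral>\<^sup>+x. ennreal \<bar>\<integral>t. r (x - t) * (?\<iota> t * (\<phi> t - a)) \<partial>lebesgue\<bar> \<partial>lebesgue)
      \<le> (\<integral>\<^sup>+x. \<integral>\<^sup>+t. w t * (\<integral>\<^sup>+s. D x t s \<partial>lebesgue) \<partial>lebesgue \<partial>lebesgue)"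
    unfolding w_def D_def
    by (intro nn_integral_mono abs_integral_mean_zero_le[OF _ r_bound \<phi> cd a]) measurable
  also have "\<dots> = (\<integral>\<^sup>+x. \<integral>\<^sup>+t. \<integral>\<^sup>+s. w t * D x t s \<partial>lebesgue \<partial>lebesgue \<partial>lebesgue)"
    unfolding D_def by (simp add: nn_integral_cmult)
  also have "\<dots> = (\<integral>\<^sup>+t. \<integral>\<^sup>+s. \<integral>\<^sup>+x. w t * D x t s \<partial>lebesgue \<partial>lebesgue \<partial>lebesgue)"
  proof -
    have "(\<lambda>p. w (snd (fst p)) * D (fst (fst p)) (snd (fst p)) (snd p))
        \<in> borel_measurable ((lebesgue \<Otimes>\<^sub>M lebesgue) \<Otimes>\<^sub>M lebesgue)"
      unfolding w_def D_def by measurable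
    from lebesgue.nn_integral_rotate3[OF this] show ?thesis by simp
  qed
  also have "\<dots> = (\<integral>\<^sup>+t. w t * (\<integral>\<^sup>+s. \<integral>\<^sup>+x. D x t s \<partial>lebesgue \<partial>lebesgue) \<partial>lebesgue)"
    unfolding D_def by (simp add: nn_integral_cmult)
  also have "\<dots> \<le> (\<integral>\<^sup>+t. w t * ennreal (Var r * (d - c)\<^sup>2 / 2) \<partial>lebesgue)"
  proof (rule nn_integral_mono)
    fix t
    show "w t * (\<integral>\<^sup>+s. \<integral>\<^sup>+x. D x t s \<partial>lebesgue \<partial>lebesgue) \<le> w t * ennreal (Var r * (d - c)\<^sup>2 / 2)"
      unfolding D_def w_def
      by (cases "t \<in> {c<..<d}") (auto intro!: mult_left_mono nn_integral_cell_translate_diff_le[OF bv supp])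
  qed
  also have "\<dots> = (\<integral>\<^sup>+t. ennreal (Var r * (d - c) / 2) * ennreal (?\<iota> t * \<bar>\<phi> t\<bar>) \<partial>lebesgue)"
  proof (rule nn_integral_cong)
    fix t
    have "?\<iota> t * \<bar>\<phi> t\<bar> / (d - c) * (Var r * (d - c)\<^sup>2 / 2) = Var r * (d - c) / 2 * (?\<iota> t * \<bar>\<phi> t\<bar>)"
      using cd by (simp add: power2_eq_square)
    then show "w t * ennreal (Var r * (d - c)\<^sup>2 / 2) = ennreal (Var r * (d - c) / 2) * ennreal (?\<iota> t * \<bar>\<phi> t\<bar>)"
      using cd Var_nonneg[OF bv] unfolding w_def by (simp flip: ennreal_mult)
  qed
  also have "\<dots> = ennreal (Var r * (d - c) / 2) * (\<integral>\<^sup>+t. ennreal (?\<iota> t * \<bar>\<phi> t\<bar>) \<partial>lebesgue)"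
    by (rule nn_integral_cmult) measurable
  finally show ?thesis .
qed

lemma conv_eq_lebesgue_integral:
  fixes r g g' :: "real \<Rightarrow> real"
  assumes [measurable]: "r \<in> borel_measurable borel" and r_bound: "\<And>y. \<bar>r y\<bar> \<le> C"
    and g': "integrable lebesgue g'" and Z: "negligible Z" and eq: "\<And>t. t \<notin> Z \<Longrightarrow> g t = g' t"
  shows "conv r g x = (\<integral>t. r (x - t) * g' t \<partial>lebesgue)"
proof -
  have "integrable lebesgue (\<lambda>t. r (x - t) * g' t)"
    by (rule integrable_bounded_times[OF _ r_bound g']) measurable
  then have "integral UNIV (\<lambda>t. r (x - t) * g' t) = (\<integral>t. r (x - t) * g' t \<partial>lebesgue)"
    by (intro integral_unique has_integral_integral_lebesgue)
  moreover have "conv r g x = integral UNIV (\<lambda>t. r (x - t) * g' t)"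
    unfolding conv_def using eq by (intro integral_spike[OF Z]) auto
  ultimately show ?thesis by simp
qed

lemma conv_ext0_eq_0:
  assumes supp: "\<And>y. \<bar>y\<bar> > B \<Longrightarrow> r y = 0" and x: "\<bar>x\<bar> > 1 + B"
  shows "conv r (ext0 g) x = 0"
proof -
  have "r (x - t) * ext0 g t = 0" for t
  proof (cases "t \<in> {0..1}")
    case True
    then have "\<bar>x - t\<bar> > B" using x by auto
    then show ?thesis using supp by simp
  qed (auto simp: ext0_def)
  then have "(\<lambda>t. r (x - t) * ext0 g t) = (\<lambda>_. 0)" by (intro ext)
  then show ?thesis by (simp add: conv_def)
qed

section \<open>The folding map\<close>

lemma pi_fold_attained: "\<exists>i::int. pi_fold x = \<bar>x - 2 * of_int i\<bar>"
proof -
  define i0 where "i0 = \<lfloor>(x + 1) / 2\<rfloor>"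
  have lo: "2 * of_int i0 \<le> x + 1" and hi: "x + 1 < 2 * of_int i0 + 2"
    using of_int_floor_le[of "(x + 1) / 2"] real_of_int_floor_add_one_gt[of "(x + 1) / 2"]
    unfolding i0_def by (simp_all add: field_simps)
  have "\<bar>x - 2 * of_int i0\<bar> \<le> \<bar>x - 2 * of_int i\<bar>" for i :: int
  proof (cases "i = i0")
    case False
    then have "of_int i \<ge> of_int i0 + (1::real) \<or> of_int i \<le> of_int i0 - (1::real)"
      by linarith
    then show ?thesis using lo hi by linarith
  qed simp
  then have "pi_fold x = \<bar>x - 2 * of_int i0\<bar>"
    unfolding pi_fold_def by (intro cInf_eq_minimum) auto
  then show ?thesis by blast
qed

lemma abs_pushforward_pi_le:
  fixes h :: "real \<Rightarrow> real" and N :: nat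
  assumes supp: "\<And>x. \<bar>x\<bar> > real N \<Longrightarrow> h x = 0" and y: "y \<in> {0..1}"
  shows "\<bar>pushforward_pi h y\<bar> \<le> (\<Sum>i\<in>{- int N..int N}. \<bar>h (2 * of_int i + y)\<bar> + \<bar>h (2 * of_int i - y)\<bar>)"
proof -
  define I where "I = {- int N..int N}"
  define S where "S = {x. pi_fold x = y}"
  define E\<^sub>1 where "E\<^sub>1 = (\<lambda>i. 2 * of_int i + y) ` I"
  define E\<^sub>2 where "E\<^sub>2 = (\<lambda>i. 2 * of_int i - y) ` I"
  define E where "E = E\<^sub>1 \<union> E\<^sub>2"
  have fin: "finite E\<^sub>1" "finite E\<^sub>2" unfolding E\<^sub>1_def E\<^sub>2_def I_def by simp_all
  then have E: "finite E" unfolding E_def by simp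
  have "h x = 0" if "x \<in> S" "x \<notin> E" for x
  proof -
    obtain i :: int where "pi_fold x = \<bar>x - 2 * of_int i\<bar>" using pi_fold_attained by blast
    then have x: "x = 2 * of_int i + y \<or> x = 2 * of_int i - y" using that(1) unfolding S_def by auto
    then have "i \<notin> I" using that(2) unfolding E_def E\<^sub>1_def E\<^sub>2_def by auto
    then have "of_int i \<ge> real N + 1 \<or> of_int i \<le> - real N - (1::real)"
      unfolding I_def by auto
    then show ?thesis using x y by (intro supp) auto
  qed
  then have "infsum h S = infsum h (S \<inter> E)"
    by (intro infsum_cong_neutral) auto
  then have "pushforward_pi h y = sum h (S \<inter> E)"
    using y E unfolding pushforward_pi_def S_def by simp
  also have "\<bar>\<dots>\<bar> \<le> sum (\<lambda>x. \<bar>h x\<bar>) E"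
    using E by (intro order.trans[OF sum_abs] sum_mono2) auto
  also have "\<dots> \<le> sum (\<lambda>x. \<bar>h x\<bar>) E\<^sub>1 + sum (\<lambda>x. \<bar>h x\<bar>) E\<^sub>2"
    using sum_Un[OF fin, of "\<lambda>x. \<bar>h x\<bar>"] sum_nonneg[of "E\<^sub>1 \<inter> E\<^sub>2" "\<lambda>x. \<bar>h x\<bar>"]
    unfolding E_def by simp
  also have "\<dots> \<le> (\<Sum>i\<in>I. \<bar>h (2 * of_int i + y)\<bar>) + (\<Sum>i\<in>I. \<bar>h (2 * of_int i - y)\<bar>)"
    unfolding E\<^sub>1_def E\<^sub>2_def using I_def
    by (intro add_mono order.trans[OF sum_image_le]) (auto simp: o_def)
  finally show ?thesis by (simp add: I_def sum.distrib)
qed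

lemma sum_indicator_unit_intervals_le:
  fixes x :: real and I :: "int set"
  assumes "finite I"
  shows "(\<Sum>i\<in>I. indicator {2 * of_int i <..< 2 * of_int i + 1} x
                 + indicator {2 * of_int i - 1 <..< 2 * of_int i} x) \<le> (1::real)"
proof -
  define q where "q i = (indicator {2 * of_int i <..< 2 * of_int i + 1} x
                        + indicator {2 * of_int i - 1 <..< 2 * of_int i} x :: real)" for i :: int
  define i0 where "i0 = (\<lfloor>x\<rfloor> + 1) div 2"
  have "q i = 0" if "i \<noteq> i0" for i
  proof (rule ccontr)
    assume "q i \<noteq> 0"
    then have "of_int (2 * i) < x \<and> x < of_int (2 * i) + 1 \<or> of_int (2 * i - 1) < x \<and> x < of_int (2 * i - 1) + 1"
      unfolding q_def by (auto simp: indicator_def split: if_splits)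
    then have "\<lfloor>x\<rfloor> = 2 * i \<or> \<lfloor>x\<rfloor> = 2 * i - 1"
      by (metis floor_unique less_imp_le)
    then show False using that unfolding i0_def by auto
  qed
  then have "(\<Sum>i\<in>I. q i) = (\<Sum>i\<in>I. if i = i0 then q i else 0)"
    by (intro sum.cong) auto
  also have "\<dots> \<le> 1"
    using assms by (simp add: q_def indicator_def)
  finally show ?thesis unfolding q_def .
qed

text \<open>Over \<open>y \<in> (0, 1)\<close>, the points \<open>2i \<plusminus> y\<close> sweep out the disjoint unit intervals \<open>(m, m + 1)\<close>,
  \<open>m \<in> \<int>\<close>; this is why folding is an \<open>L\<^sup>1\<close> contraction.\<close>

lemma nn_integral_sum_reflections_le:
  fixes h :: "real \<Rightarrow> real" and I :: "int set"
  assumes h [measurable]: "h \<in> borel_measurable lebesgue" and I: "finite I"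
  shows "(\<integral>\<^sup>+y. (\<Sum>i\<in>I. ennreal (indicator {0<..<1} y * \<bar>h (2 * of_int i + y)\<bar>)
                        + ennreal (indicator {0<..<1} y * \<bar>h (2 * of_int i - y)\<bar>)) \<partial>lebesgue)
    \<le> (\<integral>\<^sup>+x. ennreal \<bar>h x\<bar> \<partial>lebesgue)"
proof -
  let ?J = "{0::real<..<1}"
  let ?U = "\<lambda>i::int. {2 * of_int i <..< 2 * of_int i + 1 :: real}"
  let ?L = "\<lambda>i::int. {2 * of_int i - 1 <..< 2 * of_int i :: real}"
  have [measurable]: "(\<lambda>y. h (2 * of_int i + y)) \<in> borel_measurable lebesgue"
    "(\<lambda>y. h (2 * of_int i - y)) \<in> borel_measurable lebesgue" for i :: int
    using measurable_compose[OF measurable_lebesgue_real_affine h, of 1 "2 * of_int i"]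
      measurable_compose[OF measurable_lebesgue_real_affine h, of "-1" "2 * of_int i"] by simp_all
  have "(\<integral>\<^sup>+y. (\<Sum>i\<in>I. ennreal (indicator ?J y * \<bar>h (2 * of_int i + y)\<bar>)
                        + ennreal (indicator ?J y * \<bar>h (2 * of_int i - y)\<bar>)) \<partial>lebesgue)
      = (\<Sum>i\<in>I. (\<integral>\<^sup>+y. ennreal (indicator ?J y * \<bar>h (2 * of_int i + y)\<bar>) \<partial>lebesgue)
                + (\<integral>\<^sup>+y. ennreal (indicator ?J y * \<bar>h (2 * of_int i - y)\<bar>) \<partial>lebesgue))"
    by (subst nn_integral_sum, measurable) (intro sum.cong refl nn_integral_add, measurable)
  also have "\<dots> = (\<Sum>i\<in>I. (\<integral>\<^sup>+x. ennreal (indicator (?U i) x * \<bar>h x\<bar>) \<partial>lebesgue)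
                         + (\<integral>\<^sup>+x. ennreal (indicator (?L i) x * \<bar>h x\<bar>) \<partial>lebesgue))"
    by (simp only: nn_integral_indicator_translate[OF h])
  also have "\<dots> = (\<integral>\<^sup>+x. (\<Sum>i\<in>I. ennreal (indicator (?U i) x * \<bar>h x\<bar>)
                                + ennreal (indicator (?L i) x * \<bar>h x\<bar>)) \<partial>lebesgue)"
    by (subst nn_integral_sum, measurable) (intro sum.cong refl nn_integral_add[symmetric], measurable)
  also have "\<dots> = (\<integral>\<^sup>+x. ennreal ((\<Sum>i\<in>I. indicator (?U i) x + indicator (?L i) x) * \<bar>h x\<bar>) \<partial>lebesgue)"
  proof (rule nn_integral_cong)
    fix x
    have "(\<Sum>i\<in>I. ennreal (indicator (?U i) x * \<bar>h x\<bar>) + ennreal (indicator (?L i) x * \<bar>h x\<bar>))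
        = (\<Sum>i\<in>I. ennreal (indicator (?U i) x * \<bar>h x\<bar> + indicator (?L i) x * \<bar>h x\<bar>))"
      by (intro sum.cong refl ennreal_plus[symmetric]) auto
    also have "\<dots> = ennreal ((\<Sum>i\<in>I. indicator (?U i) x + indicator (?L i) x) * \<bar>h x\<bar>)"
      by (subst sum_ennreal) (auto simp: sum_distrib_right distrib_right)
    finally show "(\<Sum>i\<in>I. ennreal (indicator (?U i) x * \<bar>h x\<bar>) + ennreal (indicator (?L i) x * \<bar>h x\<bar>)) = \<dots>" .
  qed
  also have "\<dots> \<le> (\<integral>\<^sup>+x. ennreal \<bar>h x\<bar> \<partial>lebesgue)"
    by (intro nn_integral_mono ennreal_leI mult_left_le_one_le)
      (simp_all add: sum_indicator_unit_intervals_le[OF I] sum_nonneg)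
  finally show ?thesis .
qed

lemma L1norm_pushforward_pi_le:
  fixes h :: "real \<Rightarrow> real"
  assumes h [measurable]: "h \<in> borel_measurable lebesgue" and supp: "\<And>x. \<bar>x\<bar> > B \<Longrightarrow> h x = 0"
  shows "ennreal (L1norm (pushforward_pi h)) \<le> (\<integral>\<^sup>+x. ennreal \<bar>h x\<bar> \<partial>lebesgue)"
proof (cases "(\<lambda>y. \<bar>pushforward_pi h y\<bar>) integrable_on {0..1}")
  case False
  then show ?thesis by (simp add: L1norm_def not_integrable_integral)
next
  case True
  obtain N :: nat where "B \<le> real N" using real_arch_simple by blast
  then have supp_N: "\<And>x. \<bar>x\<bar> > real N \<Longrightarrow> h x = 0" using supp by fastforce
  define I where "I = {- int N..int N}"
  let ?J = "{0::real<..<1}"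
  have pointwise: "ennreal (indicator {0..1} y * \<bar>pushforward_pi h y\<bar>)
      \<le> (\<Sum>i\<in>I. ennreal (indicator ?J y * \<bar>h (2 * of_int i + y)\<bar>)
                + ennreal (indicator ?J y * \<bar>h (2 * of_int i - y)\<bar>))" if "y \<noteq> 0" "y \<noteq> 1" for y
  proof (cases "y \<in> ?J")
    case False
    with that have "y \<notin> {0..1}" by auto
    then show ?thesis by simp
  next
    case y: True
    have "ennreal (indicator {0..1} y * \<bar>pushforward_pi h y\<bar>)
        \<le> ennreal (\<Sum>i\<in>I. \<bar>h (2 * of_int i + y)\<bar> + \<bar>h (2 * of_int i - y)\<bar>)"
      unfolding I_def using y by (intro ennreal_leI) (auto intro: abs_pushforward_pi_le[OF supp_N])
    also have "\<dots> = (\<Sum>i\<in>I. ennreal (\<bar>h (2 * of_int i + y)\<bar> + \<bar>h (2 * of_int i - y)\<bar>))"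
      by (rule sum_ennreal[symmetric]) simp
    also have "\<dots> = (\<Sum>i\<in>I. ennreal (indicator ?J y * \<bar>h (2 * of_int i + y)\<bar>)
                              + ennreal (indicator ?J y * \<bar>h (2 * of_int i - y)\<bar>))"
      using y by (intro sum.cong refl) (simp add: ennreal_plus)
    finally show ?thesis .
  qed
  have "AE y in lebesgue. y \<noteq> 0 \<and> y \<noteq> 1"
    using AE_completion[OF AE_lborel_singleton[of 0]] AE_completion[OF AE_lborel_singleton[of 1]]
    by eventually_elim auto
  then have "(\<integral>\<^sup>+y. ennreal (indicator {0..1} y * \<bar>pushforward_pi h y\<bar>) \<partial>lebesgue)
      \<le> (\<integral>\<^sup>+y. (\<Sum>i\<in>I. ennreal (indicator ?J y * \<bar>h (2 * of_int i + y)\<bar>)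
                        + ennreal (indicator ?J y * \<bar>h (2 * of_int i - y)\<bar>)) \<partial>lebesgue)"
    by (intro nn_integral_mono_AE, eventually_elim) (simp add: pointwise)
  also have "\<dots> \<le> (\<integral>\<^sup>+x. ennreal \<bar>h x\<bar> \<partial>lebesgue)"
    unfolding I_def by (rule nn_integral_sum_reflections_le[OF h]) simp
  finally show ?thesis
    using nn_integral_L1norm[OF True] by simp
qed

section \<open>The Ulam projection\<close>

text \<open>Open cells: they differ from the intervals used by \<open>ulam\<close> only at the grid points.\<close>

definition ulam_cell :: "nat \<Rightarrow> nat \<Rightarrow> real set" where
  "ulam_cell k j = {real j / real k <..< real (Suc j) / real k}"

definition ulam_average :: "nat \<Rightarrow> (real \<Rightarrow> real) \<Rightarrow> nat \<Rightarrow> real" where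
  "ulam_average k f j = real k * integral {real j / real k .. real (Suc j) / real k} f"

lemma ulam_cell_floor:
  assumes "0 < k" and "t \<in> ulam_cell k j"
  shows "nat \<lfloor>t * real k\<rfloor> = j"
proof -
  have "real j < t * real k" "t * real k < real j + 1"
    using assms by (auto simp: ulam_cell_def field_simps)
  then have "\<lfloor>t * real k\<rfloor> = int j" by (intro floor_unique) auto
  then show ?thesis by simp
qed

lemma closed_ulam_cell_subset:
  assumes "j < k"
  shows "{real j / real k .. real (Suc j) / real k} \<subseteq> {0..1}"
  using assms by (auto simp: field_simps)

lemma ulam_cell_subset:
  assumes "j < k"
  shows "ulam_cell k j \<subseteq> {0..1}"
proof -
  have "ulam_cell k j \<subseteq> {real j / real k .. real (Suc j) / real k}"
    by (auto simp: ulam_cell_def)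
  with closed_ulam_cell_subset[OF assms] show ?thesis by blast
qed

lemma ulam_on_ulam_cell:
  assumes "j < k" and "t \<in> ulam_cell k j"
  shows "ulam k f t = ulam_average k f j"
proof -
  have "t \<in> {0..1}"
    using assms ulam_cell_subset by blast
  then show ?thesis
    using assms ulam_cell_floor[OF _ assms(2)] by (simp add: ulam_def ulam_average_def)
qed

lemma sum_indicator_ulam_cell_le:
  assumes "0 < k"
  shows "(\<Sum>j<k. indicator (ulam_cell k j) t) \<le> (1::real)"
proof -
  have "(\<Sum>j<k. indicator (ulam_cell k j) t :: real)
      = (\<Sum>j<k. if j = nat \<lfloor>t * real k\<rfloor> then indicator (ulam_cell k j) t else 0)"
    using ulam_cell_floor[OF assms] by (intro sum.cong refl) (auto simp: indicator_def)
  also have "\<dots> \<le> 1" by (simp add: indicator_def)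
  finally show ?thesis .
qed

lemma ext0_minus_ulam_eq_sum:
  assumes k: "0 < k" and grid: "t \<notin> (\<lambda>j. real j / real k) ` {..k}"
  shows "ext0 (\<lambda>x. f x - ulam k f x) t
       = (\<Sum>j<k. indicator (ulam_cell k j) t * (ext0 f t - ulam_average k f j))"
proof (cases "t \<in> {0..1}")
  case False
  have "t \<notin> ulam_cell k j" if "j < k" for j
    using False ulam_cell_subset[OF that] by blast
  then show ?thesis using False by (auto simp: ext0_def)
next
  case True
  define j0 where "j0 = nat \<lfloor>t * real k\<rfloor>"
  have tk: "t * real k \<le> real k"
    using True by (simp add: mult_left_le_one_le)
  have "t * real k \<noteq> real j0"
  proof
    assume "t * real k = real j0"
    moreover from tk have "j0 \<le> k"
      unfolding j0_def by (simp add: nat_le_iff floor_le_iff)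
    ultimately show False using grid k by (force simp: field_simps)
  qed
  moreover have "real j0 \<le> t * real k" and hi: "t * real k < real j0 + 1"
    using True unfolding j0_def by (auto simp: of_nat_nat)
  ultimately have lo: "real j0 < t * real k" by simp
  then have t_cell: "t \<in> ulam_cell k j0"
    using hi k unfolding ulam_cell_def by (simp add: field_simps)
  have j0: "j0 < k"
    using lo tk by simp
  have "(\<Sum>j<k. indicator (ulam_cell k j) t * (ext0 f t - ulam_average k f j))
      = (\<Sum>j<k. if j = j0 then ext0 f t - ulam_average k f j else 0)"
  proof (intro sum.cong refl)
    fix j
    have "t \<notin> ulam_cell k j" if "j \<noteq> j0"
      using ulam_cell_floor[OF k, of t j] that unfolding j0_def by blast
    then show "indicator (ulam_cell k j) t * (ext0 f t - ulam_average k f j)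
        = (if j = j0 then ext0 f t - ulam_average k f j else 0)"
      using t_cell by (cases "j = j0") simp_all
  qed
  also have "\<dots> = ext0 (\<lambda>x. f x - ulam k f x) t"
    using True j0 ulam_on_ulam_cell[OF j0 t_cell] by (simp add: ext0_def)
  finally show ?thesis ..
qed

lemma integrable_ext0:
  assumes "f absolutely_integrable_on {0..1}"
  shows "integrable lebesgue (ext0 f)"
proof -
  have "ext0 f = (\<lambda>x. indicator {0..1} x *\<^sub>R f x)"
    by (auto simp: ext0_def fun_eq_iff)
  with assms show ?thesis
    by (simp add: set_integrable_def)
qed

lemma ulam_average_times_length:
  assumes f: "f absolutely_integrable_on {0..1}" and j: "j < k"
  shows "ulam_average k f j * (real (Suc j) / real k - real j / real k)
       = (\<integral>t. indicator (ulam_cell k j) t * ext0 f t \<partial>lebesgue)"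
proof -
  let ?C = "{real j / real k .. real (Suc j) / real k}"
  have C: "?C \<subseteq> {0..1}" using closed_ulam_cell_subset[OF j] .
  have f_C: "set_integrable lebesgue ?C f"
    using set_integrable_subset[OF f] C by auto
  then have "integral ?C f = (\<integral>t. indicator ?C t * f t \<partial>lebesgue)"
    using set_lebesgue_integral_eq_integral(2)[OF f_C] by (simp add: set_lebesgue_integral_def)
  also have "\<dots> = (\<integral>t. indicator (ulam_cell k j) t * ext0 f t \<partial>lebesgue)"
  proof (rule integral_cong_AE)
    have off_ends: "indicator ?C t * f t = indicator (ulam_cell k j) t * ext0 f t"
      if "t \<noteq> real j / real k" "t \<noteq> real (Suc j) / real k" for t
    proof (cases "t \<in> ulam_cell k j")
      case True
      then show ?thesis
        using ulam_cell_subset[OF j] by (auto simp: ext0_def ulam_cell_def)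
    next
      case False
      then show ?thesis using that by (auto simp: ulam_cell_def)
    qed
    show "AE t in lebesgue. indicator ?C t * f t = indicator (ulam_cell k j) t * ext0 f t"
      using AE_completion[OF AE_lborel_singleton[of "real j / real k"]]
        AE_completion[OF AE_lborel_singleton[of "real (Suc j) / real k"]]
      by eventually_elim (rule off_ends)
    show "(\<lambda>t. indicator ?C t * f t) \<in> borel_measurable lebesgue"
      using f_C unfolding set_integrable_def by (auto dest: borel_measurable_integrable)
    show "(\<lambda>t. indicator (ulam_cell k j) t * ext0 f t) \<in> borel_measurable lebesgue"
      using borel_measurable_integrable[OF integrable_ext0[OF f]] by (simp add: ulam_cell_def)
  qed
  finally have "integral ?C f = (\<integral>t. indicator (ulam_cell k j) t * ext0 f t \<partial>lebesgue)" .
  moreover have "real (Suc j) / real k - real j / real k = 1 / real k"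
    by (simp add: diff_divide_distrib[symmetric])
  ultimately show ?thesis
    using j by (simp add: ulam_average_def)
qed

lemma conv_ulam_error_eq_sum:
  fixes r f :: "real \<Rightarrow> real"
  assumes r: "r \<in> borel_measurable borel" "\<And>y. \<bar>r y\<bar> \<le> C"
    and k: "0 < k" and f: "f absolutely_integrable_on {0..1}"
  shows "conv r (ext0 (\<lambda>x. f x - ulam k f x)) x
       = (\<Sum>j<k. \<integral>t. r (x - t) * (indicator (ulam_cell k j) t * (ext0 f t - ulam_average k f j)) \<partial>lebesgue)"
proof -
  define g where "g j t = indicator (ulam_cell k j) t * (ext0 f t - ulam_average k f j)" for j t
  have g: "integrable lebesgue (g j)" for j
  proof -
    have "real j / real k \<le> real (Suc j) / real k" by (simp add: divide_right_mono)
    have "g j = (\<lambda>t. indicator (ulam_cell k j) t * ext0 f t - ulam_average k f j * indicator (ulam_cell k j) t)"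
      by (simp add: g_def fun_eq_iff algebra_simps)
    moreover from \<open>real j / real k \<le> _\<close>
    have "integrable lebesgue (\<lambda>t. indicator (ulam_cell k j) t * ext0 f t - ulam_average k f j * indicator (ulam_cell k j) t)"
      using integrable_ext0[OF f]
      by (intro Bochner_Integration.integrable_diff integrable_mult_indicator[of _ _ "ext0 f", simplified]
            integrable_mult_right integrable_real_indicator)
        (auto simp: ulam_cell_def)
    ultimately show ?thesis by simp
  qed
  then have sum_g: "integrable lebesgue (\<lambda>t. \<Sum>j<k. g j t)" by simp
  note [measurable] = r(1) borel_measurable_integrable[OF g]
  have "conv r (ext0 (\<lambda>x. f x - ulam k f x)) x = (\<integral>t. r (x - t) * (\<Sum>j<k. g j t) \<partial>lebesgue)"
    using ext0_minus_ulam_eq_sum[OF k]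
    by (intro conv_eq_lebesgue_integral[OF r sum_g negligible_finite[of "(\<lambda>j. real j / real k) ` {..k}"]])
      (auto simp: g_def)
  also have "\<dots> = (\<Sum>j<k. \<integral>t. r (x - t) * g j t \<partial>lebesgue)"
    unfolding sum_distrib_left
    by (intro Bochner_Integration.integral_sum integrable_bounded_times[OF _ r(2) g]) measurable
  finally show ?thesis unfolding g_def .
qed

lemma borel_measurable_conv_ulam_error:
  fixes r f :: "real \<Rightarrow> real"
  assumes bv: "bounded_variation r" and supp: "\<And>y. \<bar>y\<bar> > B \<Longrightarrow> r y = 0"
    and k: "0 < k" and f: "f absolutely_integrable_on {0..1}"
  shows "conv r (ext0 (\<lambda>x. f x - ulam k f x)) \<in> borel_measurable lebesgue"
proof -
  note [measurable] = borel_measurable_bounded_variation[OF bv] borel_measurable_integrable[OF integrable_ext0[OF f]]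
  have "\<bar>r y\<bar> \<le> Var r" for y
    using abs_le_Var_if_compact_support[OF bv supp] .
  from conv_ulam_error_eq_sum[OF borel_measurable_bounded_variation[OF bv] this k f]
  show ?thesis by (subst fun_eq_iff[THEN iffD2]) (auto simp: ulam_cell_def)
qed

lemma nn_integral_conv_ulam_cell_le:
  fixes r f :: "real \<Rightarrow> real"
  assumes bv: "bounded_variation r" and supp: "\<And>y. \<bar>y\<bar> > B \<Longrightarrow> r y = 0"
    and f: "f absolutely_integrable_on {0..1}" and j: "j < k"
  shows "(\<integral>\<^sup>+x. ennreal \<bar>\<integral>t. r (x - t) * (indicator (ulam_cell k j) t * (ext0 f t - ulam_average k f j))
            \<partial>lebesgue\<bar> \<partial>lebesgue)
    \<le> ennreal (Var r / (2 * real k)) * (\<integral>\<^sup>+t. ennreal (indicator (ulam_cell k j) t * \<bar>ext0 f t\<bar>) \<partial>lebesgue)"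
proof -
  have "real j / real k < real (Suc j) / real k" using j by (simp add: divide_strict_right_mono)
  from nn_integral_conv_mean_zero_le[where B = B, OF bv supp integrable_ext0[OF f] this
      ulam_average_times_length[OF f j, unfolded ulam_cell_def]]
  show ?thesis
    by (simp add: ulam_cell_def diff_divide_distrib[symmetric] mult.commute)
qed

lemma sum_nn_integral_ulam_cell_le:
  assumes k: "0 < k" and f: "f absolutely_integrable_on {0..1}"
  shows "(\<Sum>j<k. \<integral>\<^sup>+t. ennreal (indicator (ulam_cell k j) t * \<bar>ext0 f t\<bar>) \<partial>lebesgue) \<le> ennreal (L1norm f)"
proof -
  note [measurable] = borel_measurable_integrable[OF integrable_ext0[OF f]]
  have "(\<Sum>j<k. \<integral>\<^sup>+t. ennreal (indicator (ulam_cell k j) t * \<bar>ext0 f t\<bar>) \<partial>lebesgue)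
      = (\<integral>\<^sup>+t. (\<Sum>j<k. ennreal (indicator (ulam_cell k j) t * \<bar>ext0 f t\<bar>)) \<partial>lebesgue)"
    by (subst nn_integral_sum) (auto simp: ulam_cell_def)
  also have "\<dots> = (\<integral>\<^sup>+t. ennreal ((\<Sum>j<k. indicator (ulam_cell k j) t) * \<bar>ext0 f t\<bar>) \<partial>lebesgue)"
    by (simp only: sum_distrib_right sum_ennreal[symmetric] abs_ge_zero mult_nonneg_nonneg indicator_pos_le)
  also have "\<dots> \<le> (\<integral>\<^sup>+t. ennreal \<bar>ext0 f t\<bar> \<partial>lebesgue)"
    using sum_indicator_ulam_cell_le[OF k]
    by (intro nn_integral_mono ennreal_leI mult_left_le_one_le) (auto intro: sum_nonneg)
  also have "\<dots> = ennreal (L1norm f)"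
  proof -
    have "\<bar>ext0 f t\<bar> = indicator {0..1} t * \<bar>f t\<bar>" for t
      by (simp add: ext0_def)
    then show ?thesis
      using f nn_integral_L1norm[of f] by (simp add: absolutely_integrable_on_def)
  qed
  finally show ?thesis .
qed

lemma nn_integral_conv_ulam_error_le:
  fixes r f :: "real \<Rightarrow> real"
  assumes bv: "bounded_variation r" and supp: "\<And>y. \<bar>y\<bar> > B \<Longrightarrow> r y = 0"
    and k: "0 < k" and f: "f absolutely_integrable_on {0..1}"
  shows "(\<integral>\<^sup>+x. ennreal \<bar>conv r (ext0 (\<lambda>x. f x - ulam k f x)) x\<bar> \<partial>lebesgue)
      \<le> ennreal (Var r / (2 * real k) * L1norm f)"
proof -
  define I where "I j x = (\<integral>t. r (x - t) * (indicator (ulam_cell k j) t * (ext0 f t - ulam_average k f j))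
                            \<partial>lebesgue)" for j x
  note [measurable] = borel_measurable_bounded_variation[OF bv] borel_measurable_integrable[OF integrable_ext0[OF f]]
  have r_bound: "\<bar>r y\<bar> \<le> Var r" for y
    using abs_le_Var_if_compact_support[OF bv supp] .
  have [measurable]: "I j \<in> borel_measurable lebesgue" for j
    unfolding I_def ulam_cell_def by measurable
  have "(\<integral>\<^sup>+x. ennreal \<bar>conv r (ext0 (\<lambda>x. f x - ulam k f x)) x\<bar> \<partial>lebesgue)
      \<le> (\<integral>\<^sup>+x. (\<Sum>j<k. ennreal \<bar>I j x\<bar>) \<partial>lebesgue)"
    unfolding conv_ulam_error_eq_sum[OF borel_measurable_bounded_variation[OF bv] r_bound k f] I_def[symmetric]
    by (intro nn_integral_mono) (simp add: ennreal_leI sum_abs)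
  also have "\<dots> = (\<Sum>j<k. \<integral>\<^sup>+x. ennreal \<bar>I j x\<bar> \<partial>lebesgue)"
    by (rule nn_integral_sum) measurable
  also have "\<dots> \<le> ennreal (Var r / (2 * real k))
      * (\<Sum>j<k. \<integral>\<^sup>+t. ennreal (indicator (ulam_cell k j) t * \<bar>ext0 f t\<bar>) \<partial>lebesgue)"
    unfolding sum_distrib_left I_def by (intro sum_mono nn_integral_conv_ulam_cell_le[OF bv supp f]) auto
  also have "\<dots> \<le> ennreal (Var r / (2 * real k)) * ennreal (L1norm f)"
    by (intro mult_left_mono sum_nn_integral_ulam_cell_le[OF k f]) simp
  also have "\<dots> = ennreal (Var r / (2 * real k) * L1norm f)"
    using Var_nonneg[OF bv] L1norm_nonneg[of f] by (intro ennreal_mult[symmetric]) auto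
  finally show ?thesis .
qed

theorem proposition76:
  fixes \<rho> :: "real \<Rightarrow> real" and k :: nat and \<xi> :: real
  assumes bv: "bounded_variation \<rho>"
    and supp: "\<And>x. x \<notin> {-1/2..1/2} \<Longrightarrow> \<rho> x = 0"
    and int1: "(\<rho> has_integral 1) UNIV"
    and k: "k \<ge> 1"
    and xi: "\<xi> > 0"
  shows "\<forall>f. f absolutely_integrable_on {0..1} \<longrightarrow>
           L1norm (N_op \<rho> \<xi> (\<lambda>x. f x - ulam k f x))
             \<le> 1/2 * (1 / real k) * (1 / \<xi>) * Var \<rho> * L1norm f"
proof (intro allI impI)
  fix f :: "real \<Rightarrow> real"
  assume f: "f absolutely_integrable_on {0..1}"
  define r where "r = rho_scaled \<rho> \<xi>"
  define h where "h = conv r (ext0 (\<lambda>x. f x - ulam k f x))"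
  have r: "bounded_variation r" "Var r \<le> Var \<rho> / \<xi>"
    unfolding r_def using bounded_variation_rho_scaled Var_rho_scaled_le bv xi by blast+
  have r_supp: "\<And>y. \<bar>y\<bar> > \<xi> / 2 \<Longrightarrow> r y = 0"
    unfolding r_def using rho_scaled_eq_0[OF supp xi] .
  have k': "0 < k" using k by simp
  have "ennreal (L1norm (N_op \<rho> \<xi> (\<lambda>x. f x - ulam k f x))) \<le> (\<integral>\<^sup>+x. ennreal \<bar>h x\<bar> \<partial>lebesgue)"
    unfolding N_op_def h_def r_def[symmetric]
    using borel_measurable_conv_ulam_error[where B = "\<xi> / 2", OF r(1) r_supp k' f]
      conv_ext0_eq_0[where B = "\<xi> / 2", OF r_supp]
    by (intro L1norm_pushforward_pi_le[where B = "1 + \<xi> / 2"]) auto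
  also have "\<dots> \<le> ennreal (Var r / (2 * real k) * L1norm f)"
    unfolding h_def by (rule nn_integral_conv_ulam_error_le[where B = "\<xi> / 2", OF r(1) r_supp k' f])
  also have "\<dots> \<le> ennreal (Var \<rho> / \<xi> / (2 * real k) * L1norm f)"
    using r(2) L1norm_nonneg[of f] by (intro ennreal_leI mult_right_mono divide_right_mono) auto
  also have "Var \<rho> / \<xi> / (2 * real k) * L1norm f = 1/2 * (1 / real k) * (1 / \<xi>) * Var \<rho> * L1norm f"
    by (simp add: field_simps)
  finally show "L1norm (N_op \<rho> \<xi> (\<lambda>x. f x - ulam k f x)) \<le> 1/2 * (1 / real k) * (1 / \<xi>) * Var \<rho> * L1norm f"
    using Var_nonneg[OF bv] L1norm_nonneg[of f] xi by (simp add: ennreal_le_iff)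
qed

end
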